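(* Let $\mathcal A$ be an $n$-DPDA whose input alphabet contains the letter $\star$. Let $R$ be a (finite) run of $\mathcal A$ such that both $R(0)$ and $R(|R|)$ are milestone configurations and $R$ reads only stars (a word in $\star^*$). Then $R$ is $0$-upper.
   Context: Stacks: fix order $n\ge1$, finite stack alphabet $\Gamma$. A $0$-stack is $(\gamma,x)$ with $\gamma\in\Gamma$, $x=(x_n,\dots,x_1)$ a vector of $n$ positive integers (position). For $k\in\{1,\dots,n\}$ a $k$-stack is a finite list $[s_1,\dots,s_m]$ ($m\ge0$) of nonempty $(k-1)$-stacks such that for some $x_n,\dots,x_{k+1}$, every position in $s_i$ has the form $(x_n,\dots,x_{k+1},i,y_{k-1},\dots,y_1)$. The top is at the right; $s^k:s^{k-1}$ appends at the top (right-associative); for $s^r=t^r:t^{r-1}:\dots:t^k$, $\mathrm{top}^k(s^r)=t^k$. Equality of stacks includes positions. For $k<n$, $\mathsf p_{+1}(s^k)$ adds $1$ to the $(n-k)$-th coordinate of all positions. Operations of order $k\ge1$: $\mathsf{pop}^k(s^r:\dots:s^k:s^{k-1})=s^r:\dots:s^k$, defined only if the topmost $k$-stack has at least two $(k-1)$-stacks; $\mathsf{push}^k_\gamma(s^r:\dots:s^0)=s^r:\dots:s^{k+1}:(s^k:\dots:s^0):\mathsf p_{+1}(s^{k-1}:\dots:s^1:(\gamma,x))$ where $s^0=(\gamma',x)$. An $n$-DPDA has transitions determined by state and topmost stack symbol, each either $\mathrm{read}(\vec q)$ ($\vec q:A\to Q$ injective; leads to $(\vec q(a),s)$ for $a\in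 A$, this step reads $a$) or $(q,op)$ with $op$ a stack operation of order $\le n$ (leads to $(q,op(s))$ if defined; reads nothing). Configurations are (state, nonempty $n$-stack). A run is a finite (or, for infinite runs, infinite) sequence $R=c_0,c_1,\dots$ with each $c_i$ a successor of $c_{i-1}$; $R(i)=c_i$, $|R|$ the length, $R[i,j]=c_i,\dots,c_j$. The word read is the concatenation of letters read by the steps. History: for a run $R$ and a $0$-stack $s^0$ of $R(|R|)$, $\mathrm{hist}(R,s^0)$ is a $0$-stack of $R(0)$: if $|R|=0$ it is $s^0$; if $R=S\circ T$, $|T|=1$, and the last step is a read or a $\mathsf{pop}$, or a $\mathsf{push}^r_\gamma$ with $s^0$ not in the topmost $(r-1)$-stack of $R(|R|)$, it is $\mathrm{hist}(S,s^0)$; if the last step is $\mathsf{push}^r_\gamma$ and $s^0$ is in the topmost $(r-1)$-stack of $R(|R|)$, it is $\mathrm{hist}(S,t^0)$ with $t^0$ equal to $s^0$ with the $(n-r+1)$-th position coordinate decreased by $1$. For a $k$-stack $s^k$ of $R(|R|)$, $k\ge1$, $\mathrm{hist}(R,s^k)$ is the $k$-stack of $R(0)$ containing $\mathrm{hist}(R,s^0)$ for all $0$-stacks $s^0$ of $s^k$. For $k\in\{0,\dots,n\}$, $R$ is $k$-upper if $\mathrm{hist}(R,\mathrm{top}^k(R(|R|)))=\mathrm{top}^k(R(0))$. Milestone: a configuration $c$ is a milestone if there exist an infinite run $R$ from $c$ reading only stars and an infinite set $I\subseteq\mathbb N$ with $0\in I$ such that $R[i,j]$ is $0$-upper for all $i,j\in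 I$ with $i\le j$. *)

theory Defs
  imports Main
begin

text \<open>A 0-stack (gamma, x) is Z gamma x, where x = [x_n, ..., x_1] is the position
 (list of length n; list index j (0-based) holds coordinate x_(n-j)).
 A k-stack (k >= 1) is L [s_1, ..., s_m], the top being at the right.\<close>

datatype 'g stk = Z 'g "nat list" | L "'g stk list"

primrec zs :: "'g stk \<Rightarrow> ('g \<times> nat list) set" and zsl :: "'g stk list \<Rightarrow> ('g \<times> nat list) set" where
  "zs (Z g x) = {(g, x)}"
| "zs (L ss) = zsl ss"
| "zsl [] = {}"
| "zsl (s # ss) = zs s \<union> zsl ss"

fun kids :: "'g stk \<Rightarrow> 'g stk list" where
  "kids (Z _ _) = []"
| "kids (L ss) = ss"

fun nonempty :: "'g stk \<Rightarrow> bool" where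
  "nonempty (Z _ _) = True"
| "nonempty (L ss) = (ss \<noteq> [])"

fun stack_of :: "nat \<Rightarrow> 'g set \<Rightarrow> nat \<Rightarrow> 'g stk \<Rightarrow> bool" where
  "stack_of n G 0 (Z g x) = (g \<in> G \<and> length x = n \<and> (\<forall>c\<in>set x. 0 < c))"
| "stack_of n G 0 (L _) = False"
| "stack_of n G (Suc k) (Z _ _) = False"
| "stack_of n G (Suc k) (L ss) =
     ((\<forall>s\<in>set ss. stack_of n G k s \<and> nonempty s) \<and>
      (\<exists>pre. \<forall>i<length ss. \<forall>z\<in>zs (ss ! i).
          take (n - Suc k) (snd z) = pre \<and> snd z ! (n - Suc k) = Suc i))"

text \<open>topd d s: the topmost substack at depth d; for an n-stack s, top^k(s) = topd (n-k) s.\<close>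
fun topd :: "nat \<Rightarrow> 'g stk \<Rightarrow> 'g stk" where
  "topd 0 s = s"
| "topd (Suc d) (L ss) = topd d (last ss)"
| "topd (Suc d) (Z g x) = Z g x"

fun zof :: "'g stk \<Rightarrow> 'g \<times> nat list" where
  "zof (Z g x) = (g, x)"
| "zof (L _) = undefined"

definition top0 :: "nat \<Rightarrow> 'g stk \<Rightarrow> 'g \<times> nat list" where
  "top0 n s = zof (topd n s)"

definition topsym :: "nat \<Rightarrow> 'g stk \<Rightarrow> 'g" where
  "topsym n s = fst (top0 n s)"

fun modtop :: "nat \<Rightarrow> ('g stk list \<Rightarrow> 'g stk list) \<Rightarrow> 'g stk \<Rightarrow> 'g stk" where
  "modtop 0 f (L ss) = L (f ss)"
| "modtop 0 f (Z g x) = Z g x"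
| "modtop (Suc d) f (L ss) = L (butlast ss @ [modtop d f (last ss)])"
| "modtop (Suc d) f (Z g x) = Z g x"

fun modz :: "nat \<Rightarrow> 'g \<Rightarrow> 'g stk \<Rightarrow> 'g stk" where
  "modz 0 \<gamma> (Z g x) = Z \<gamma> x"
| "modz 0 \<gamma> (L ss) = L ss"
| "modz (Suc d) \<gamma> (L ss) = L (butlast ss @ [modz d \<gamma> (last ss)])"
| "modz (Suc d) \<gamma> (Z g x) = Z g x"

text \<open>For a k-stack
 (k<n), p_{+1} adds 1 to the (n-k)-th coordinate in the listing (x_n,...,x_1),
 i.e. to list index n-k-1 (coordinate x_(k+1)).\<close>
primrec pinc :: "nat \<Rightarrow> 'g stk \<Rightarrow> 'g stk" where
  "pinc j (Z g x) = Z g (x[j := Suc (x ! j)])"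
| "pinc j (L ss) = L (map (pinc j) ss)"

datatype 'g sop = Pop nat | Push nat 'g

text \<open>Stack operations on n-stacks. pop^k needs the topmost k-stack to have at least two
 elements. push^k_gamma appends to the topmost k-stack a copy of its topmost (k-1)-stack
 with top symbol replaced by gamma and p_{+1} applied (list index n-k = coordinate x_k).\<close>
fun apply_op :: "nat \<Rightarrow> 'g sop \<Rightarrow> 'g stk \<Rightarrow> 'g stk option" where
  "apply_op n (Pop k) s =
     (if 2 \<le> length (kids (topd (n - k) s)) then Some (modtop (n - k) butlast s) else None)"
| "apply_op n (Push k \<gamma>) s =
     Some (modtop (n - k) (\<lambda>ss. ss @ [pinc (n - k) (modz (k - 1) \<gamma> (last ss))]) s)"

datatype ('q, 'a, 'g) tr = Read "'a \<Rightarrow> 'q" | Op 'q "'g sop"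

definition op_ok :: "nat \<Rightarrow> 'g set \<Rightarrow> 'g sop \<Rightarrow> bool" where
  "op_ok n G op = (case op of Pop k \<Rightarrow> 1 \<le> k \<and> k \<le> n
                             | Push k \<gamma> \<Rightarrow> 1 \<le> k \<and> k \<le> n \<and> \<gamma> \<in> G)"

definition dpda :: "nat \<Rightarrow> 'q set \<Rightarrow> 'g set \<Rightarrow> 'a set \<Rightarrow> ('q \<Rightarrow> 'g \<Rightarrow> ('q, 'a, 'g) tr) \<Rightarrow> bool" where
  "dpda n Q G A \<delta> \<longleftrightarrow> 1 \<le> n \<and> finite Q \<and> finite G \<and> finite A \<and>
     (\<forall>q\<in>Q. \<forall>\<gamma>\<in>G. case \<delta> q \<gamma> of
          Read f \<Rightarrow> inj_on f A \<and> f ` A \<subseteq> Q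
        | Op q' op \<Rightarrow> q' \<in> Q \<and> op_ok n G op)"

type_synonym ('q, 'g) conf = "'q \<times> 'g stk"

definition valid_conf :: "nat \<Rightarrow> 'q set \<Rightarrow> 'g set \<Rightarrow> ('q, 'g) conf \<Rightarrow> bool" where
  "valid_conf n Q G c \<longleftrightarrow> fst c \<in> Q \<and> stack_of n G n (snd c) \<and> nonempty (snd c)"

text \<open>step n A delta c l c': c' is a successor of c, the step reading l (None = nothing).\<close>
definition step :: "nat \<Rightarrow> 'a set \<Rightarrow> ('q \<Rightarrow> 'g \<Rightarrow> ('q, 'a, 'g) tr) \<Rightarrow>
    ('q, 'g) conf \<Rightarrow> 'a option \<Rightarrow> ('q, 'g) conf \<Rightarrow> bool" where
  "step n A \<delta> c l c' \<longleftrightarrow>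
     (case \<delta> (fst c) (topsym n (snd c)) of
        Read f \<Rightarrow> (\<exists>a\<in>A. l = Some a \<and> c' = (f a, snd c))
      | Op q' op \<Rightarrow> l = None \<and> apply_op n op (snd c) = Some (snd c') \<and> fst c' = q')"

definition star_step :: "nat \<Rightarrow> 'a set \<Rightarrow> ('q \<Rightarrow> 'g \<Rightarrow> ('q, 'a, 'g) tr) \<Rightarrow> 'a \<Rightarrow>
    ('q, 'g) conf \<Rightarrow> ('q, 'g) conf \<Rightarrow> bool" where
  "star_step n A \<delta> star c c' \<longleftrightarrow> step n A \<delta> c None c' \<or> step n A \<delta> c (Some star) c'"

definition hist_step :: "nat \<Rightarrow> ('q \<Rightarrow> 'g \<Rightarrow> ('q, 'a, 'g) tr) \<Rightarrow>
    ('q, 'g) conf \<Rightarrow> ('q, 'g) conf \<Rightarrow> nat list \<Rightarrow> nat list" where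
  "hist_step n \<delta> c c' p =
     (case \<delta> (fst c) (topsym n (snd c)) of
        Read _ \<Rightarrow> p
      | Op _ op \<Rightarrow> (case op of
          Pop _ \<Rightarrow> p
        | Push r _ \<Rightarrow> (if p \<in> snd ` zs (topd (n - (r - 1)) (snd c'))
                       then p[n - r := p ! (n - r) - 1] else p)))"

text \<open>histd n delta R i d p: the position in R(i) that is the history of position p of R(i+d)
 along the run R[i, i+d].\<close>
primrec histd :: "nat \<Rightarrow> ('q \<Rightarrow> 'g \<Rightarrow> ('q, 'a, 'g) tr) \<Rightarrow> (nat \<Rightarrow> ('q, 'g) conf) \<Rightarrow>
    nat \<Rightarrow> nat \<Rightarrow> nat list \<Rightarrow> nat list" where
  "histd n \<delta> R i 0 p = p"
| "histd n \<delta> R i (Suc d) p = histd n \<delta> R i d (hist_step n \<delta> (R (i + d)) (R (i + Suc d)) p)"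

definition hist0 :: "nat \<Rightarrow> ('q \<Rightarrow> 'g \<Rightarrow> ('q, 'a, 'g) tr) \<Rightarrow> (nat \<Rightarrow> ('q, 'g) conf) \<Rightarrow>
    nat \<Rightarrow> nat \<Rightarrow> 'g \<times> nat list \<Rightarrow> 'g \<times> nat list" where
  "hist0 n \<delta> R i j s0 =
     (THE z. z \<in> zs (snd (R i)) \<and> snd z = histd n \<delta> R i (j - i) (snd s0))"

definition upper0 :: "nat \<Rightarrow> ('q \<Rightarrow> 'g \<Rightarrow> ('q, 'a, 'g) tr) \<Rightarrow> (nat \<Rightarrow> ('q, 'g) conf) \<Rightarrow>
    nat \<Rightarrow> nat \<Rightarrow> bool" where
  "upper0 n \<delta> R i j \<longleftrightarrow> hist0 n \<delta> R i j (top0 n (snd (R j))) = top0 n (snd (R i))"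

definition milestone :: "nat \<Rightarrow> 'q set \<Rightarrow> 'g set \<Rightarrow> 'a set \<Rightarrow> ('q \<Rightarrow> 'g \<Rightarrow> ('q, 'a, 'g) tr) \<Rightarrow>
    'a \<Rightarrow> ('q, 'g) conf \<Rightarrow> bool" where
  "milestone n Q G A \<delta> star c \<longleftrightarrow>
     (\<exists>R. R 0 = c \<and> (\<forall>i. valid_conf n Q G (R i)) \<and>
          (\<forall>i. star_step n A \<delta> star (R i) (R (Suc i))) \<and>
          (\<exists>I. infinite I \<and> 0 \<in> I \<and>
               (\<forall>i\<in>I. \<forall>j\<in>I. i \<le> j \<longrightarrow> upper0 n \<delta> R i j)))"

end

theory Submission
  imports Defs "HOL-Library.Infinite_Set"
begin

text \<open>The 0-stacks of a valid stack have pairwise distinct positions, and the topmost position is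
  the lexicographic maximum among them. The history of a single step maps positions of the new
  stack to positions of the old one, and if two positions first differ at index i, their histories
  first differ either at a deeper index or at i with the same order. By determinism both milestone
  runs are parts of one infinite star-run from R(0), which is 0-upper between any two indices of
  an infinite set I containing 0 and of an infinite set K containing m. If R were not 0-upper, the
  history of the top of R(m) would first differ from the top of R(0) at some index e. Passing
  alternately to later indices of I and K then yields first differences at strictly smaller
  indices, an infinite descent.\<close>

definition positions :: "'g stk \<Rightarrow> nat list set" where
  "positions s = snd ` zs s"

fun top_defined :: "nat \<Rightarrow> 'g stk \<Rightarrow> bool" where
  "top_defined 0 s = True"
| "top_defined (Suc d) (L ss) = (ss \<noteq> [] \<and> top_defined d (last ss))"
| "top_defined (Suc d) (Z _ _) = False"

definition top_pos :: "nat \<Rightarrow> 'g stk \<Rightarrow> nat list" where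
  "top_pos d s = snd (zof (topd d s))"

lemma zsl_eq_Union: "zsl ss = \<Union> (zs ` set ss)"
  by (induct ss) auto

lemma zsl_append: "zsl (xs @ ys) = zsl xs \<union> zsl ys"
  by (simp add: zsl_eq_Union)

lemma zsl_nth: "z \<in> zsl ss \<Longrightarrow> \<exists>i<length ss. z \<in> zs (ss ! i)"
  by (auto simp: zsl_eq_Union in_set_conv_nth)

lemma top_pos_L: "top_pos (Suc d) (L ss) = top_pos d (last ss)"
  by (simp add: top_pos_def)

lemma nth_eq_if_take_eq: "take j x = take j y \<Longrightarrow> i < j \<Longrightarrow> x ! i = y ! i"
  by (metis nth_take)

lemma take_eq_take_mono: "take j x = take j y \<Longrightarrow> k \<le> j \<Longrightarrow> take k x = take k y"
  by (metis min.absorb1 take_take)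

lemma stack_of_top:
  "stack_of n G k s \<Longrightarrow> nonempty s \<Longrightarrow>
     top_defined k s \<and> (\<exists>g x. topd k s = Z g x \<and> (g, x) \<in> zs s)"
proof (induct k arbitrary: s)
  case 0 then show ?case by (cases s) auto
next
  case (Suc k)
  then obtain ss where s: "s = L ss" "ss \<noteq> []" by (cases s) auto
  then have "last ss \<in> set ss" by simp
  with Suc s have "stack_of n G k (last ss)" "nonempty (last ss)" by auto
  with Suc.hyps obtain g x where
    "top_defined k (last ss)" "topd k (last ss) = Z g x" "(g, x) \<in> zs (last ss)" by blast
  with s \<open>last ss \<in> set ss\<close> show ?case by (auto simp: zsl_eq_Union)
qed

lemma stack_of_zs: "stack_of n G k s \<Longrightarrow> z \<in> zs s \<Longrightarrow> fst z \<in> G \<and> length (snd z) = n"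
proof (induct k arbitrary: s)
  case 0 then show ?case by (cases s) auto
next
  case (Suc k) then show ?case by (cases s) (auto simp: zsl_eq_Union)
qed

lemma stack_of_length: "stack_of n G k s \<Longrightarrow> x \<in> positions s \<Longrightarrow> length x = n"
  using stack_of_zs by (fastforce simp: positions_def)

lemma stack_of_coord:
  "stack_of n G (Suc k) (L ss) \<Longrightarrow> i < length ss \<Longrightarrow> z \<in> zs (ss ! i) \<Longrightarrow>
     snd z ! (n - Suc k) = Suc i"
  by auto

lemma top_pos_in_positions: "stack_of n G k s \<Longrightarrow> nonempty s \<Longrightarrow> top_pos k s \<in> positions s"
  using stack_of_top[of n G k s] by (force simp: top_pos_def positions_def)

lemma positions_L_nth:
  "x \<in> positions (L ss) \<Longrightarrow> \<exists>a<length ss. x \<in> positions (ss ! a)"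
  using zsl_nth by (fastforce simp: positions_def)

lemma positions_nth_coord:
  "stack_of n G (Suc k) (L ss) \<Longrightarrow> a < length ss \<Longrightarrow> x \<in> positions (ss ! a) \<Longrightarrow>
     x ! (n - Suc k) = Suc a"
  by (auto simp: positions_def)

lemma top_pos_coord:
  assumes st: "stack_of n G (Suc k) (L ss)" and ne: "ss \<noteq> []"
  shows "top_pos (Suc k) (L ss) ! (n - Suc k) = length ss"
proof -
  have "stack_of n G k (last ss)" "nonempty (last ss)" using st ne by auto
  then have "top_pos k (last ss) \<in> positions (ss ! (length ss - 1))"
    using top_pos_in_positions ne by (simp add: last_conv_nth)
  from positions_nth_coord[OF st _ this] ne show ?thesis by (simp add: top_pos_L)
qed

lemma positions_coord_le:
  "stack_of n G (Suc k) (L ss) \<Longrightarrow> x \<in> positions (L ss) \<Longrightarrow> x ! (n - Suc k) \<le> length ss"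
  by (metis Suc_leI positions_L_nth positions_nth_coord)

lemma positions_last_if_coord:
  assumes "stack_of n G (Suc k) (L ss)" and "x \<in> positions (L ss)"
    and "x ! (n - Suc k) = length ss"
  shows "x \<in> positions (last ss)"
proof -
  obtain a where "a < length ss" "x \<in> positions (ss ! a)" using positions_L_nth assms(2) by blast
  moreover from this have "Suc a = length ss" using positions_nth_coord[OF assms(1)] assms(3) by simp
  ultimately show ?thesis by (metis diff_Suc_1 last_conv_nth list.size(3) nat.distinct(1))
qed

lemma positions_last_subset: "ss \<noteq> [] \<Longrightarrow> positions (last ss) \<subseteq> positions (L ss)"
  by (force simp: positions_def zsl_eq_Union)

lemma positions_take_top:
  assumes st: "stack_of n G k s" and ne: "nonempty s" and x: "x \<in> positions s"
  shows "take (n - k) x = take (n - k) (top_pos k s)"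
proof (cases k)
  case 0
  then show ?thesis using st x by (cases s) (auto simp: positions_def top_pos_def)
next
  case (Suc k')
  obtain ss where s: "s = L ss" "ss \<noteq> []" using st ne Suc by (cases s) auto
  obtain pre where pre: "\<And>i z. i < length ss \<Longrightarrow> z \<in> zs (ss ! i) \<Longrightarrow> take (n - k) (snd z) = pre"
    using st s Suc by auto
  have "stack_of n G k' (last ss)" "nonempty (last ss)" using st s Suc by auto
  then have "top_pos k' (last ss) \<in> positions (ss ! (length ss - 1))"
    using top_pos_in_positions s(2) by (metis last_conv_nth)
  moreover obtain a where "a < length ss" "x \<in> positions (ss ! a)"
    using positions_L_nth x s by blast
  ultimately obtain z z' where "z \<in> zs (ss ! a)" "snd z = x"
      "z' \<in> zs (ss ! (length ss - 1))" "snd z' = top_pos k s"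
    using s Suc by (auto simp: positions_def top_pos_L)
  with pre \<open>a < length ss\<close> s(2) show ?thesis by (metis diff_less length_greater_0_conv zero_less_one)
qed

lemma position_le_top:
  "stack_of n G k s \<Longrightarrow> nonempty s \<Longrightarrow> k \<le> n \<Longrightarrow> x \<in> positions s \<Longrightarrow> i < n \<Longrightarrow>
     take i x = take i (top_pos k s) \<Longrightarrow> x ! i \<le> top_pos k s ! i"
proof (induct k arbitrary: s)
  case 0 then show ?case by (cases s) (auto simp: positions_def top_pos_def)
next
  case (Suc k)
  then obtain ss where s: "s = L ss" "ss \<noteq> []" by (cases s) auto
  have st: "stack_of n G (Suc k) (L ss)" using Suc s by simp
  have x: "x \<in> positions (L ss)" and T: "top_pos (Suc k) s = top_pos k (last ss)"
    using Suc.prems(4) s by (simp_all add: top_pos_L)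
  consider "i < n - Suc k" | "i = n - Suc k" | "n - Suc k < i" by linarith
  then show ?case
  proof cases
    case 1
    show ?thesis using nth_eq_if_take_eq[OF positions_take_top[OF Suc.prems(1,2,4)] 1] by simp
  next
    case 2
    have "x ! i \<le> length ss" using positions_coord_le[OF st x] 2 by simp
    also have "length ss = top_pos (Suc k) s ! i" using top_pos_coord[OF st s(2)] s 2 by simp
    finally show ?thesis .
  next
    case 3
    have "x ! (n - Suc k) = top_pos (Suc k) s ! (n - Suc k)"
      using nth_eq_if_take_eq[OF Suc.prems(6) 3] .
    then have "x \<in> positions (last ss)"
      using positions_last_if_coord[OF st x] top_pos_coord[OF st s(2)] s by simp
    moreover have "stack_of n G k (last ss)" "nonempty (last ss)" using st s(2) by auto
    ultimately show ?thesis using Suc.hyps Suc.prems(3,5,6) T by simp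
  qed
qed

lemma zs_eq_if_position_eq:
  "stack_of n G k s \<Longrightarrow> z \<in> zs s \<Longrightarrow> z' \<in> zs s \<Longrightarrow> snd z = snd z' \<Longrightarrow> z = z'"
proof (induct k arbitrary: s)
  case 0 then show ?case by (cases s) auto
next
  case (Suc k)
  then obtain ss where s: "s = L ss" by (cases s) auto
  have st: "stack_of n G (Suc k) (L ss)" using Suc.prems(1) s by simp
  have "z \<in> zsl ss" "z' \<in> zsl ss" using Suc.prems(2,3) s by simp_all
  then obtain a b where a: "a < length ss" "z \<in> zs (ss ! a)" and b: "b < length ss" "z' \<in> zs (ss ! b)"
    using zsl_nth by blast
  have "a = b" using stack_of_coord[OF st a] stack_of_coord[OF st b] Suc.prems(4) by simp
  moreover have "stack_of n G k (ss ! a)" using st a(1) by (simp add: nth_mem)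
  ultimately show ?case using Suc.hyps a b Suc.prems(4) by blast
qed

lemma positions_topd:
  "stack_of n G k s \<Longrightarrow> nonempty s \<Longrightarrow> k \<le> n \<Longrightarrow> e \<le> k \<Longrightarrow>
     positions (topd e s) = {x \<in> positions s. take (n - k + e) x = take (n - k + e) (top_pos k s)}"
proof (induct k arbitrary: s e)
  case 0 then show ?case using positions_take_top[of n G 0 s] by auto
next
  case (Suc k)
  show ?case
  proof (cases e)
    case 0 then show ?thesis using positions_take_top[of n G "Suc k" s] Suc.prems by auto
  next
    case (Suc e')
    obtain ss where s: "s = L ss" "ss \<noteq> []" using Suc.prems(1,2) by (cases s) auto
    have st: "stack_of n G (Suc k) (L ss)" using Suc.prems(1) s by simp
    have IH: "positions (topd e' (last ss)) =
        {x \<in> positions (last ss). take (n - k + e') x = take (n - k + e') (top_pos k (last ss))}"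
      using Suc.hyps[of "last ss" e'] st s Suc.prems(3,4) \<open>e = Suc e'\<close> by simp
    let ?top = "take (n - k + e') (top_pos k (last ss))"
    have "x \<in> positions (last ss)" if "x \<in> positions (L ss)" "take (n - k + e') x = ?top" for x
    proof (rule positions_last_if_coord[OF st that(1)])
      have "x ! (n - Suc k) = top_pos k (last ss) ! (n - Suc k)"
        using nth_eq_if_take_eq[OF that(2)] Suc.prems(3) by simp
      then show "x ! (n - Suc k) = length ss" using top_pos_coord[OF st s(2)] by (simp add: top_pos_L)
    qed
    then have "{x \<in> positions (last ss). take (n - k + e') x = ?top} =
        {x \<in> positions (L ss). take (n - k + e') x = ?top}"
      using positions_last_subset[OF s(2)] by blast
    moreover have "n - Suc k + e = n - k + e'" using Suc.prems(3) \<open>e = Suc e'\<close> by simp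
    ultimately show ?thesis using IH s \<open>e = Suc e'\<close> by (simp only: top_pos_L topd.simps)
  qed
qed

lemma top_defined_mono: "top_defined a s \<Longrightarrow> b \<le> a \<Longrightarrow> top_defined b s"
proof (induct a arbitrary: s b)
  case 0 then show ?case by simp
next
  case (Suc a) then show ?case by (cases s; cases b) auto
qed

lemma topd_Z: "topd b (Z g x) = Z g x"
  by (cases b) auto

lemma topd_add: "topd (a + b) s = topd b (topd a s)"
proof (induct a arbitrary: s)
  case 0 then show ?case by simp
next
  case (Suc a) then show ?case by (cases s) (auto simp: topd_Z)
qed

lemma top_defined_topd: "top_defined (a + b) s \<Longrightarrow> top_defined b (topd a s)"
proof (induct a arbitrary: s)
  case 0 then show ?case by simp
next
  case (Suc a) then show ?case by (cases s) auto
qed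

lemma top_defined_SucD:
  "top_defined (Suc d) s \<Longrightarrow> \<exists>ss. topd d s = L ss \<and> ss \<noteq> [] \<and> last ss = topd (Suc d) s"
proof (induct d arbitrary: s)
  case 0 then show ?case by (cases s) auto
next
  case (Suc d) then show ?case by (cases s) auto
qed

lemma topd_modtop: "top_defined d s \<Longrightarrow> topd d s = L ss \<Longrightarrow> topd d (modtop d f s) = L (f ss)"
proof (induct d arbitrary: s)
  case 0 then show ?case by (cases s) auto
next
  case (Suc d) then show ?case by (cases s) auto
qed

lemma zs_butlast_last: "ss \<noteq> [] \<Longrightarrow> zs (L ss) = zsl (butlast ss) \<union> zs (last ss)"
  using zsl_append[of "butlast ss" "[last ss]"] by (simp add: snoc_eq_iff_butlast)

lemma zs_modtop_subset:
  "top_defined d s \<Longrightarrow> topd d s = L ss \<Longrightarrow> zs (modtop d f s) \<subseteq> zs s \<union> zsl (f ss)"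
proof (induct d arbitrary: s)
  case 0 then show ?case by (cases s) auto
next
  case (Suc d)
  then obtain ts where s: "s = L ts" "ts \<noteq> []" "top_defined d (last ts)" "topd d (last ts) = L ss"
    by (cases s) auto
  then show ?case using Suc.hyps[OF s(3,4)] zs_butlast_last[OF s(2)] by (auto simp: zsl_append)
qed

lemma positions_modz: "top_defined k s \<Longrightarrow> positions (modz k \<gamma> s) = positions s"
proof (induct k arbitrary: s)
  case 0 then show ?case by (cases s) (auto simp: positions_def)
next
  case (Suc k)
  then obtain ts where s: "s = L ts" "ts \<noteq> []" "top_defined k (last ts)" by (cases s) auto
  then show ?case
    using Suc.hyps[OF s(3)] zs_butlast_last[OF s(2)] by (simp add: positions_def zsl_append image_Un)
qed

lemma positions_pinc: "positions (pinc j s) = (\<lambda>x. x[j := Suc (x ! j)]) ` positions s"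
proof -
  have "zs (pinc j s) = (\<lambda>(g, x). (g, x[j := Suc (x ! j)])) ` zs s"
    by (induct s) (auto simp: zsl_eq_Union)
  then show ?thesis by (auto simp: positions_def image_image split_beta)
qed

lemma top0_in_zs: "stack_of n G k s \<Longrightarrow> nonempty s \<Longrightarrow> top0 k s \<in> zs s \<and> snd (top0 k s) = top_pos k s"
  using stack_of_top[of n G k s] by (auto simp: top0_def top_pos_def)

lemma positions_topd_subset:
  "stack_of n G n s \<Longrightarrow> nonempty s \<Longrightarrow> e \<le> n \<Longrightarrow> positions (topd e s) \<subseteq> positions s"
  using positions_topd[of n G n s e] by auto

lemma positions_apply_Pop:
  assumes st: "stack_of n G n s" "nonempty s" and k: "1 \<le> k" "k \<le> n"
    and s': "apply_op n (Pop k) s = Some s'"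
  shows "positions s' \<subseteq> positions s"
proof -
  have def_n: "top_defined n s" using stack_of_top[OF st] by blast
  moreover have "Suc (n - k) \<le> n" using k by simp
  ultimately have "top_defined (Suc (n - k)) s" by (rule top_defined_mono)
  then obtain ss where ss: "topd (n - k) s = L ss" using top_defined_SucD by blast
  have def: "top_defined (n - k) s" using top_defined_mono[OF def_n] by simp
  have "zs s' \<subseteq> zs s \<union> zsl (butlast ss)"
    using zs_modtop_subset[OF def ss, of butlast] s' by (simp split: if_splits)
  moreover have "zsl (butlast ss) \<subseteq> zs (topd (n - k) s)"
    using ss by (auto simp: zsl_eq_Union dest: in_set_butlastD)
  moreover have "positions (topd (n - k) s) \<subseteq> positions s"
    using positions_topd_subset[OF st] by simp
  ultimately show ?thesis unfolding positions_def by blast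
qed

lemma positions_apply_Push:
  assumes st: "stack_of n G n s" "nonempty s" and d: "d < n"
    and s': "apply_op n (Push (n - d) \<gamma>) s = Some s'"
  shows "p \<in> positions (topd (Suc d) s') \<Longrightarrow> p[d := p ! d - 1] \<in> positions s"
    and "positions s' \<subseteq> positions s \<union> positions (topd (Suc d) s')"
proof -
  have def: "top_defined n s" using stack_of_top[OF st] by blast
  then have "top_defined (Suc d) s" using d by (simp add: top_defined_mono)
  then obtain ss where ss: "topd d s = L ss" "ss \<noteq> []" "last ss = topd (Suc d) s"
    using top_defined_SucD by blast
  define new where "new = pinc d (modz (n - d - 1) \<gamma> (last ss))"
  have s'_eq: "s' = modtop d (\<lambda>ss. ss @ [pinc d (modz (n - d - 1) \<gamma> (last ss))]) s"
    using s' d by simp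
  have "topd d s' = L (ss @ [new])"
    using topd_modtop[OF top_defined_mono[OF def] ss(1)] d s'_eq new_def by simp
  then have top_new: "topd (Suc d) s' = new" using topd_add[of d 1 s'] by simp
  have "Suc d + (n - d - 1) = n" using d by simp
  then have "top_defined (Suc d + (n - d - 1)) s" using def by simp
  then have "top_defined (n - d - 1) (last ss)" using top_defined_topd ss(3) by metis
  then have pos_new: "positions new = (\<lambda>x. x[d := Suc (x ! d)]) ` positions (last ss)"
    unfolding new_def positions_pinc by (simp add: positions_modz)
  have "Suc d \<le> n" using d by simp
  from positions_topd_subset[OF st this] ss(3)
  have last_sub: "positions (last ss) \<subseteq> positions s" by simp
  show "p[d := p ! d - 1] \<in> positions s" if "p \<in> positions (topd (Suc d) s')"
  proof -
    have "p \<in> positions new" using that top_new by simp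
    then obtain x where x: "x \<in> positions (last ss)" "p = x[d := Suc (x ! d)]"
      unfolding pos_new by blast
    have "length x = n" using stack_of_length[OF st(1)] x(1) last_sub by (meson subsetD)
    then have "p[d := p ! d - 1] = x" using x(2) d by simp
    then show ?thesis using x(1) last_sub by blast
  qed
  have "zs s' \<subseteq> zs s \<union> zsl (ss @ [new])"
    using zs_modtop_subset[OF top_defined_mono[OF def] ss(1)] d s'_eq new_def by simp
  also have "zsl (ss @ [new]) = zs (topd d s) \<union> zs new" using ss(1) by (simp add: zsl_append)
  finally have "zs s' \<subseteq> zs s \<union> zs (topd d s) \<union> zs new" by blast
  moreover have "positions (topd d s) \<subseteq> positions s" using positions_topd_subset[OF st] d by simp
  ultimately show "positions s' \<subseteq> positions s \<union> positions (topd (Suc d) s')"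
    using top_new unfolding positions_def by blast
qed

lemma star_step_cases:
  assumes dp: "dpda n Q G A \<delta>" and step: "star_step n A \<delta> star c c'" and v: "valid_conf n Q G c"
  obtains (keep) "hist_step n \<delta> c c' = id" "positions (snd c') \<subseteq> positions (snd c)"
  | (push) d \<gamma> where "d < n" "apply_op n (Push (n - d) \<gamma>) (snd c) = Some (snd c')"
      "hist_step n \<delta> c c' = (\<lambda>p. if p \<in> positions (topd (Suc d) (snd c')) then p[d := p ! d - 1] else p)"
proof -
  have st: "stack_of n G n (snd c)" "nonempty (snd c)" and q: "fst c \<in> Q"
    using v by (simp_all add: valid_conf_def)
  have "topsym n (snd c) \<in> G"
    using top0_in_zs[OF st] stack_of_zs[OF st(1)] by (simp add: topsym_def)
  then have tr_ok: "case \<delta> (fst c) (topsym n (snd c)) of Read f \<Rightarrow> True | Op q' op \<Rightarrow> op_ok n G op"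
    using dp q unfolding dpda_def by (fastforce split: tr.splits)
  show thesis
  proof (cases "\<delta> (fst c) (topsym n (snd c))")
    case (Read f)
    then have "snd c' = snd c" using step by (auto simp: star_step_def step_def)
    with Read show thesis by (intro keep) (auto simp: hist_step_def)
  next
    case (Op q' op)
    have ao: "apply_op n op (snd c) = Some (snd c')"
      using step Op by (auto simp: star_step_def step_def)
    show thesis
    proof (cases op)
      case (Pop k)
      then have "1 \<le> k" "k \<le> n" using tr_ok Op by (simp_all add: op_ok_def)
      from positions_apply_Pop[OF st this] ao Pop
      have "positions (snd c') \<subseteq> positions (snd c)" by simp
      with Op Pop show thesis by (intro keep) (auto simp: hist_step_def)
    next
      case (Push r \<gamma>)
      then have r: "1 \<le> r" "r \<le> n" using tr_ok Op by (simp_all add: op_ok_def)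
      then have "n - r < n" "n - (n - r) = r" "n - (r - 1) = Suc (n - r)" by auto
      with Op Push ao show thesis
        by (intro push[of "n - r" \<gamma>]) (auto simp: hist_step_def positions_def)
    qed
  qed
qed

lemma hist_step_in_positions:
  assumes "dpda n Q G A \<delta>" "star_step n A \<delta> star c c'" "valid_conf n Q G c"
    and p: "p \<in> positions (snd c')"
  shows "hist_step n \<delta> c c' p \<in> positions (snd c)"
  using assms(1-3)
proof (cases rule: star_step_cases)
  case keep then show ?thesis using p by auto
next
  case (push d \<gamma>)
  have "stack_of n G n (snd c)" "nonempty (snd c)" using assms(3) by (simp_all add: valid_conf_def)
  from positions_apply_Push[OF this push(1,2)] show ?thesis using p push(3) by auto
qed

definition first_diff :: "nat \<Rightarrow> nat list \<Rightarrow> nat list \<Rightarrow> bool" where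
  "first_diff i x y \<longleftrightarrow> i < length x \<and> take i x = take i y \<and> x ! i \<noteq> y ! i"

lemma first_diff_unique: "first_diff i x y \<Longrightarrow> first_diff j x y \<Longrightarrow> i = j"
  unfolding first_diff_def using nth_eq_if_take_eq by (metis linorder_neqE_nat)

lemma first_diff_sym: "length x = length y \<Longrightarrow> first_diff i x y \<Longrightarrow> first_diff i y x"
  unfolding first_diff_def by auto

lemma first_diff_neq: "first_diff i x y \<Longrightarrow> x \<noteq> y"
  by (auto simp: first_diff_def)

lemma first_diff_exists: "length x = length y \<Longrightarrow> x \<noteq> y \<Longrightarrow> \<exists>i. first_diff i x y"
proof (induct x arbitrary: y)
  case Nil then show ?case by simp
next
  case (Cons a x)
  then obtain b y' where y: "y = b # y'" by (cases y) auto
  show ?case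
  proof (cases "a = b")
    case True
    then have "x \<noteq> y'" "length x = length y'" using Cons.prems y by auto
    then obtain i where "first_diff i x y'" using Cons.hyps by blast
    then have "first_diff (Suc i) (a # x) y" using y True by (simp add: first_diff_def)
    then show ?thesis by blast
  next
    case False
    then have "first_diff 0 (a # x) y" using y by (simp add: first_diff_def)
    then show ?thesis by blast
  qed
qed

text \<open>The invariant behind the descent: passing from a pair of positions (q, q') first differing
  at i to a pair (p, p') first differing at j either moves the first difference strictly deeper
  or keeps it together with its sign.\<close>
definition refines_diff :: "nat \<Rightarrow> nat \<Rightarrow> nat list \<Rightarrow> nat list \<Rightarrow> nat list \<Rightarrow> nat list \<Rightarrow> bool" where
  "refines_diff i j q q' p p' \<longleftrightarrow> i < j \<or> (i = j \<and> (q ! i < q' ! i \<longleftrightarrow> p ! i < p' ! i))"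

lemma refines_diff_refl: "first_diff i q q' \<Longrightarrow> first_diff j q q' \<Longrightarrow> refines_diff i j q q' q q'"
  by (drule (1) first_diff_unique) (simp add: refines_diff_def)

lemma refines_diff_swap:
  "first_diff i q q' \<Longrightarrow> first_diff j p p' \<Longrightarrow> refines_diff i j q' q p' p \<Longrightarrow> refines_diff i j q q' p p'"
  unfolding refines_diff_def first_diff_def by auto

lemma refines_diff_trans:
  "refines_diff i i' q q' p p' \<Longrightarrow> refines_diff i' j p p' r r' \<Longrightarrow> refines_diff i j q q' r r'"
  unfolding refines_diff_def by auto

lemma refines_diff_decr_both:
  assumes d: "take (Suc d) q = take (Suc d) q'"
    and i: "first_diff i q q'" and j: "first_diff j (q[d := q ! d - 1]) (q'[d := q' ! d - 1])"
  shows "refines_diff i j q q' (q[d := q ! d - 1]) (q'[d := q' ! d - 1])"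
proof -
  have "d < i"
  proof (rule ccontr)
    assume "\<not> d < i"
    then have "q ! i = q' ! i" using nth_eq_if_take_eq[OF d] by simp
    then show False using i by (simp add: first_diff_def)
  qed
  moreover have "q ! d = q' ! d" using nth_eq_if_take_eq[OF d] by simp
  ultimately have "first_diff i (q[d := q ! d - 1]) (q'[d := q' ! d - 1])"
    using i unfolding first_diff_def by (simp add: take_update_swap)
  then have "i = j" using j by (rule first_diff_unique)
  then show ?thesis using \<open>d < i\<close> by (simp add: refines_diff_def)
qed

lemma refines_diff_decr_one:
  assumes len: "length q = n" "length q' = n" "length T = n" and d: "d < n"
    and qT: "take (Suc d) q = take (Suc d) T" and q'T: "take (Suc d) q' \<noteq> take (Suc d) T"
    and q'_le: "\<And>k. k < n \<Longrightarrow> take k q' = take k T \<Longrightarrow> q' ! k \<le> T ! k"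
    and i: "first_diff i q q'" and j: "first_diff j (q[d := q ! d - 1]) q'"
  shows "refines_diff i j q q' (q[d := q ! d - 1]) q'"
proof -
  define h where "h = q[d := q ! d - 1]"
  have "i \<le> d"
  proof (rule ccontr)
    assume "\<not> i \<le> d"
    then have "take (Suc d) q = take (Suc d) q'"
      using i take_eq_take_mono unfolding first_diff_def by (metis not_less_eq_eq)
    then show False using qT q'T by simp
  qed
  show ?thesis
  proof (cases "i < d")
    case True
    then have "first_diff i h q'" using i len unfolding first_diff_def h_def by (simp add: take_update_cancel)
    then have "i = j" using j first_diff_unique unfolding h_def by blast
    then show ?thesis using True unfolding refines_diff_def by simp
  next
    case False
    with \<open>i \<le> d\<close> have id: "i = d" by simp
    have tq: "take d q' = take d q" using i id unfolding first_diff_def by simp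
    have "take d q = take d T" using take_eq_take_mono[OF qT] by simp
    moreover have "q ! d = T ! d" using nth_eq_if_take_eq[OF qT] by simp
    ultimately have "q' ! d \<le> q ! d" using q'_le[OF d] tq by simp
    moreover have "q' ! d \<noteq> q ! d" using i id unfolding first_diff_def by simp
    ultimately have lt: "q' ! d < q ! d" by simp
    have hd: "h ! d = q ! d - 1" and th: "take d h = take d q"
      unfolding h_def using len d by (simp_all add: take_update_cancel)
    show ?thesis
    proof (cases "h ! d = q' ! d")
      case False
      then have "first_diff d h q'" using th tq len d unfolding first_diff_def h_def by simp
      then have "j = d" using j first_diff_unique unfolding h_def by blast
      then show ?thesis using id lt hd False unfolding refines_diff_def h_def[symmetric] by auto
    next
      case True
      then have "take (Suc d) h = take (Suc d) q'" using th tq len d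
        by (simp add: h_def take_Suc_conv_app_nth)
      then have "d < j" using j nth_eq_if_take_eq unfolding first_diff_def h_def[symmetric]
        by (metis not_less_eq)
      then show ?thesis using id unfolding refines_diff_def by simp
    qed
  qed
qed

lemma hist_step_refines_diff:
  assumes "dpda n Q G A \<delta>" "star_step n A \<delta> star c c'" "valid_conf n Q G c"
    and v': "valid_conf n Q G c'" and q: "q \<in> positions (snd c')" and q': "q' \<in> positions (snd c')"
    and i: "first_diff i q q'" and j: "first_diff j (hist_step n \<delta> c c' q) (hist_step n \<delta> c c' q')"
  shows "refines_diff i j q q' (hist_step n \<delta> c c' q) (hist_step n \<delta> c c' q')"
  using assms(1-3)
proof (cases rule: star_step_cases)
  case keep
  then show ?thesis using i j refines_diff_refl by simp
next
  case (push d \<gamma>)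
  define M where "M = positions (topd (Suc d) (snd c'))"
  define T where "T = top_pos n (snd c')"
  have st': "stack_of n G n (snd c')" "nonempty (snd c')" using v' by (simp_all add: valid_conf_def)
  have h: "hist_step n \<delta> c c' = (\<lambda>p. if p \<in> M then p[d := p ! d - 1] else p)"
    using push(3) unfolding M_def by simp
  have M: "M = {x \<in> positions (snd c'). take (Suc d) x = take (Suc d) T}"
    using positions_topd[OF st' order_refl, of "Suc d"] push(1) unfolding M_def T_def by simp
  have len: "length q = n" "length q' = n" "length T = n"
    using stack_of_length[OF st'(1)] q q' top_pos_in_positions[OF st'] T_def by auto
  have le_T: "\<And>x k. x \<in> positions (snd c') \<Longrightarrow> k < n \<Longrightarrow> take k x = take k T \<Longrightarrow> x ! k \<le> T ! k"
    using position_le_top[OF st' order_refl] T_def by blast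
  consider "q \<in> M" "q' \<in> M" | "q \<in> M" "q' \<notin> M" | "q \<notin> M" "q' \<in> M" | "q \<notin> M" "q' \<notin> M"
    by blast
  then show ?thesis
  proof cases
    case 1
    then have "take (Suc d) q = take (Suc d) q'" using M by simp
    from refines_diff_decr_both[OF this i] show ?thesis using j 1 h by simp
  next
    case 2
    then have "take (Suc d) q = take (Suc d) T" "take (Suc d) q' \<noteq> take (Suc d) T" using M q' by simp_all
    from refines_diff_decr_one[OF len push(1) this le_T[OF q'] i] show ?thesis using j 2 h by simp
  next
    case 3
    then have "take (Suc d) q' = take (Suc d) T" "take (Suc d) q \<noteq> take (Suc d) T" using M q by simp_all
    moreover have "first_diff i q' q" using first_diff_sym[OF _ i] len by simp
    moreover have "first_diff j (q'[d := q' ! d - 1]) q" using j 3 h first_diff_sym len by simp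
    ultimately have "refines_diff i j q' q (q'[d := q' ! d - 1]) q"
      using refines_diff_decr_one[OF len(2,1,3) push(1) _ _ le_T[OF q]] by blast
    then show ?thesis using refines_diff_swap[OF i] j 3 h by simp
  next
    case 4
    then show ?thesis using i j h refines_diff_refl by simp
  qed
qed

definition star_run :: "nat \<Rightarrow> 'q set \<Rightarrow> 'g set \<Rightarrow> 'a set \<Rightarrow> ('q \<Rightarrow> 'g \<Rightarrow> ('q, 'a, 'g) tr) \<Rightarrow> 'a \<Rightarrow>
    (nat \<Rightarrow> ('q, 'g) conf) \<Rightarrow> bool" where
  "star_run n Q G A \<delta> star S \<longleftrightarrow>
     (\<forall>t. valid_conf n Q G (S t)) \<and> (\<forall>t. star_step n A \<delta> star (S t) (S (Suc t)))"

definition upper_on :: "nat \<Rightarrow> ('q \<Rightarrow> 'g \<Rightarrow> ('q, 'a, 'g) tr) \<Rightarrow> (nat \<Rightarrow> ('q, 'g) conf) \<Rightarrow>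
    nat set \<Rightarrow> bool" where
  "upper_on n \<delta> S I \<longleftrightarrow> (\<forall>i\<in>I. \<forall>j\<in>I. i \<le> j \<longrightarrow> upper0 n \<delta> S i j)"

lemma milestone_iff:
  "milestone n Q G A \<delta> star c \<longleftrightarrow>
     (\<exists>S. S 0 = c \<and> star_run n Q G A \<delta> star S \<and> (\<exists>I. infinite I \<and> 0 \<in> I \<and> upper_on n \<delta> S I))"
  unfolding milestone_def star_run_def upper_on_def by blast

lemma star_run_valid: "star_run n Q G A \<delta> star S \<Longrightarrow> stack_of n G n (snd (S t)) \<and> nonempty (snd (S t))"
  by (simp add: star_run_def valid_conf_def)

lemma histd_add: "histd n \<delta> R i (a + b) p = histd n \<delta> R i a (histd n \<delta> R (i + a) b p)"
  by (induct b arbitrary: p) (simp_all add: add.assoc)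

lemma histd_shift: "histd n \<delta> (\<lambda>t. R (m + t)) i d p = histd n \<delta> R (m + i) d p"
  by (induct d arbitrary: p) (simp_all add: add.assoc)

lemma histd_cong:
  "(\<And>t. t \<le> d \<Longrightarrow> R (i + t) = R' (i + t)) \<Longrightarrow> histd n \<delta> R i d p = histd n \<delta> R' i d p"
proof (induct d arbitrary: p)
  case 0 then show ?case by simp
next
  case (Suc d)
  then have "R (i + d) = R' (i + d)" "R (Suc (i + d)) = R' (Suc (i + d))"
    using Suc.prems[of d] Suc.prems[of "Suc d"] by simp_all
  then show ?case using Suc by simp
qed

lemma histd_in_positions:
  assumes "dpda n Q G A \<delta>" and S: "star_run n Q G A \<delta> star S"
  shows "p \<in> positions (snd (S (s + k))) \<Longrightarrow> histd n \<delta> S s k p \<in> positions (snd (S s))"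
proof (induct k arbitrary: p)
  case 0 then show ?case by simp
next
  case (Suc k)
  have "star_step n A \<delta> star (S (s + k)) (S (Suc (s + k)))" "valid_conf n Q G (S (s + k))"
    using S unfolding star_run_def by blast+
  from hist_step_in_positions[OF assms(1) this] Suc.prems
  have "hist_step n \<delta> (S (s + k)) (S (s + Suc k)) p \<in> positions (snd (S (s + k)))" by simp
  then show ?case using Suc.hyps by simp
qed

lemma histd_refines_diff:
  assumes dp: "dpda n Q G A \<delta>" and S: "star_run n Q G A \<delta> star S"
  shows "q \<in> positions (snd (S (s + k))) \<Longrightarrow> q' \<in> positions (snd (S (s + k))) \<Longrightarrow>
     first_diff i q q' \<Longrightarrow> first_diff j (histd n \<delta> S s k q) (histd n \<delta> S s k q') \<Longrightarrow>
     refines_diff i j q q' (histd n \<delta> S s k q) (histd n \<delta> S s k q')"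
proof (induct k arbitrary: q q' i)
  case 0 then show ?case using refines_diff_refl by simp
next
  case (Suc k)
  define p where "p = hist_step n \<delta> (S (s + k)) (S (s + Suc k)) q"
  define p' where "p' = hist_step n \<delta> (S (s + k)) (S (s + Suc k)) q'"
  have step: "star_step n A \<delta> star (S (s + k)) (S (s + Suc k))"
    "valid_conf n Q G (S (s + k))" "valid_conf n Q G (S (s + Suc k))"
    using S unfolding star_run_def add_Suc_right by blast+
  have p: "p \<in> positions (snd (S (s + k)))" "p' \<in> positions (snd (S (s + k)))"
    using hist_step_in_positions[OF dp step(1,2)] Suc.prems(1,2) p_def p'_def by auto
  have "histd n \<delta> S s k p \<noteq> histd n \<delta> S s k p'" using Suc.prems(4) first_diff_neq p_def p'_def by simp
  moreover have "length p = length p'" using stack_of_length star_run_valid[OF S] p by metis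
  ultimately obtain i' where i': "first_diff i' p p'" using first_diff_exists by blast
  have "refines_diff i i' q q' p p'"
    using hist_step_refines_diff[OF dp step Suc.prems(1-3)] i' p_def p'_def by simp
  moreover have "refines_diff i' j p p' (histd n \<delta> S s k p) (histd n \<delta> S s k p')"
    using Suc.hyps[OF p i'] Suc.prems(4) p_def p'_def by simp
  ultimately show ?case using refines_diff_trans p_def p'_def by simp
qed

lemma upper0_iff_histd:
  assumes dp: "dpda n Q G A \<delta>" and S: "star_run n Q G A \<delta> star S" and ij: "i \<le> j"
  shows "upper0 n \<delta> S i j \<longleftrightarrow>
    histd n \<delta> S i (j - i) (top_pos n (snd (S j))) = top_pos n (snd (S i))"
proof -
  have vi: "stack_of n G n (snd (S i))" "nonempty (snd (S i))"
    and vj: "stack_of n G n (snd (S j))" "nonempty (snd (S j))" using star_run_valid[OF S] by auto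
  define P where "P = histd n \<delta> S i (j - i) (top_pos n (snd (S j)))"
  have "P \<in> positions (snd (S i))"
    using histd_in_positions[OF dp S, of "top_pos n (snd (S j))" i "j - i"]
      top_pos_in_positions[OF vj] ij P_def by simp
  then obtain z where z: "z \<in> zs (snd (S i))" "snd z = P" unfolding positions_def by blast
  have "hist0 n \<delta> S i j (top0 n (snd (S j))) = z"
    unfolding hist0_def top0_in_zs[OF vj, THEN conjunct2] P_def[symmetric]
    using z zs_eq_if_position_eq[OF vi(1)] by (intro the_equality) auto
  then have "upper0 n \<delta> S i j \<longleftrightarrow> z = top0 n (snd (S i))" unfolding upper0_def by simp
  also have "\<dots> \<longleftrightarrow> P = top_pos n (snd (S i))"
    using z top0_in_zs[OF vi] zs_eq_if_position_eq[OF vi(1)] by metis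
  finally show ?thesis unfolding P_def .
qed

text \<open>Going forward to some c in J beyond b, the history of the top of S c is the top at a but
  not at b; at b it therefore differs from the top at some index e'. Since history refines first
  differences and tops are lexicographic maxima, e' cannot equal e, so e' < e.\<close>
lemma descent_step:
  assumes dp: "dpda n Q G A \<delta>" and S: "star_run n Q G A \<delta> star S"
    and J: "infinite J" "upper_on n \<delta> S J" and a: "a \<in> J" and ab: "a \<le> b"
    and e: "first_diff e (top_pos n (snd (S a))) (histd n \<delta> S a (b - a) (top_pos n (snd (S b))))"
  obtains c e' where "c \<in> J" "b \<le> c" "e' < e"
    "first_diff e' (top_pos n (snd (S b))) (histd n \<delta> S b (c - b) (top_pos n (snd (S c))))"
proof -
  let ?\<tau> = "\<lambda>t. top_pos n (snd (S t))"
  have vs: "\<And>t. stack_of n G n (snd (S t))" "\<And>t. nonempty (snd (S t))"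
    using star_run_valid[OF S] by auto
  have top_in: "\<And>t. ?\<tau> t \<in> positions (snd (S t))" using top_pos_in_positions vs by blast
  have len: "\<And>t x. x \<in> positions (snd (S t)) \<Longrightarrow> length x = n" using stack_of_length vs by blast
  have below: "\<And>t x k. x \<in> positions (snd (S t)) \<Longrightarrow> first_diff k x (?\<tau> t) \<Longrightarrow> x ! k < ?\<tau> t ! k"
    using position_le_top[OF vs order_refl] len unfolding first_diff_def by (metis le_neq_implies_less)
  obtain c where c: "c \<in> J" "b \<le> c" using J(1) infinite_nat_iff_unbounded_le by blast
  define y where "y = histd n \<delta> S b (c - b) (?\<tau> c)"
  define x where "x = histd n \<delta> S a (b - a) (?\<tau> b)"
  have S_b: "S (a + (b - a)) = S b" and S_c: "S (b + (c - b)) = S c" using ab c(2) by simp_all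
  have "upper0 n \<delta> S a c" using J(2) a c ab unfolding upper_on_def by simp
  then have "histd n \<delta> S a (c - a) (?\<tau> c) = ?\<tau> a" using upper0_iff_histd[OF dp S] ab c(2) by simp
  moreover have "histd n \<delta> S a (c - a) (?\<tau> c) = histd n \<delta> S a (b - a) y"
    using histd_add[of n \<delta> S a "b - a" "c - b" "?\<tau> c"] ab c(2) y_def by simp
  ultimately have y_a: "histd n \<delta> S a (b - a) y = ?\<tau> a" by simp
  have y: "y \<in> positions (snd (S b))"
    using histd_in_positions[OF dp S, of "?\<tau> c" b "c - b"] top_in S_c y_def by simp
  have x: "x \<in> positions (snd (S a))"
    using histd_in_positions[OF dp S, of "?\<tau> b" a "b - a"] top_in S_b x_def by simp
  have "y \<noteq> ?\<tau> b" using y_a e first_diff_neq x_def by metis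
  then obtain e' where e': "first_diff e' (?\<tau> b) y" using first_diff_exists len y top_in by metis
  have e_sym: "first_diff e x (?\<tau> a)" using first_diff_sym e len x top_in x_def by metis
  have "refines_diff e' e (?\<tau> b) y x (?\<tau> a)"
    using histd_refines_diff[OF dp S, of "?\<tau> b" a "b - a" y e' e] S_b top_in y e' e_sym x_def y_a
    by simp
  moreover have "x ! e < ?\<tau> a ! e" using below x e_sym by blast
  moreover have "y ! e' < ?\<tau> b ! e'" using below y first_diff_sym e' len top_in by metis
  ultimately have "e' < e" unfolding refines_diff_def by auto
  with c e' y_def show thesis by (intro that) auto
qed

lemma upper0_between_upper_sets:
  assumes dp: "dpda n Q G A \<delta>" and S: "star_run n Q G A \<delta> star S"
    and I: "infinite I" "upper_on n \<delta> S I" and K: "infinite K" "upper_on n \<delta> S K"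
    and a: "a \<in> I" and b: "b \<in> K" and ab: "a \<le> b"
  shows "upper0 n \<delta> S a b"
proof (rule ccontr)
  let ?\<tau> = "\<lambda>t. top_pos n (snd (S t))"
  have descent: "False"
    if "infinite I" "upper_on n \<delta> S I" "infinite K" "upper_on n \<delta> S K" "a \<in> I" "b \<in> K" "a \<le> b"
      "first_diff e (?\<tau> a) (histd n \<delta> S a (b - a) (?\<tau> b))" for e I K a b
    using that
  proof (induct e arbitrary: I K a b rule: less_induct)
    case (less e)
    obtain c e' where "c \<in> I" "b \<le> c" "e' < e" "first_diff e' (?\<tau> b) (histd n \<delta> S b (c - b) (?\<tau> c))"
      using descent_step[OF dp S less.prems(1,2,5,7,8)] .
    then show False using less.hyps less.prems(1-4,6) by blast
  qed
  assume "\<not> upper0 n \<delta> S a b"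
  then have "histd n \<delta> S a (b - a) (?\<tau> b) \<noteq> ?\<tau> a" using upper0_iff_histd[OF dp S ab] by simp
  moreover have vs: "stack_of n G n (snd (S t))" "nonempty (snd (S t))" for t
    using star_run_valid[OF S] by auto
  moreover have "histd n \<delta> S a (b - a) (?\<tau> b) \<in> positions (snd (S a))"
    using histd_in_positions[OF dp S, of "?\<tau> b" a "b - a"] top_pos_in_positions[OF vs] ab by simp
  ultimately obtain e where "first_diff e (?\<tau> a) (histd n \<delta> S a (b - a) (?\<tau> b))"
    using first_diff_exists stack_of_length top_pos_in_positions by metis
  then show False using descent I K a b ab by blast
qed

lemma star_step_deterministic: "star_step n A \<delta> star c c1 \<Longrightarrow> star_step n A \<delta> star c c2 \<Longrightarrow> c1 = c2"
  by (cases "\<delta> (fst c) (topsym n (snd c))") (auto simp: star_step_def step_def prod_eq_iff)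

lemma star_steps_agree:
  assumes "R 0 = S 0" and "\<And>i. i < k \<Longrightarrow> star_step n A \<delta> star (R i) (R (Suc i))"
    and "\<And>i. i < k \<Longrightarrow> star_step n A \<delta> star (S i) (S (Suc i))"
  shows "t \<le> k \<Longrightarrow> R t = S t"
proof (induct t)
  case 0 then show ?case using assms(1) by simp
next
  case (Suc t) then show ?case using assms(2,3)[of t] star_step_deterministic by fastforce
qed

lemma upper0_cong:
  assumes "\<And>t. t \<le> j \<Longrightarrow> R t = S t"
  shows "upper0 n \<delta> R 0 j = upper0 n \<delta> S 0 j"
proof -
  have "histd n \<delta> R 0 j = histd n \<delta> S 0 j" using histd_cong[of j R 0 S] assms by fastforce
  then show ?thesis using assms[of 0] assms[of j] by (simp add: upper0_def hist0_def)
qed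

lemma upper_on_shift: "upper_on n \<delta> (\<lambda>t. S (m + t)) I = upper_on n \<delta> S ((+) m ` I)"
  by (auto simp: upper_on_def upper0_def hist0_def histd_shift)

theorem mainTheorem13:
  fixes n :: nat and Q :: "'q set" and G :: "'g set" and A :: "'a set"
    and \<delta> :: "'q \<Rightarrow> 'g \<Rightarrow> ('q, 'a, 'g) tr" and star :: 'a
    and R :: "nat \<Rightarrow> ('q, 'g) conf" and m :: nat
  assumes "dpda n Q G A \<delta>"
    and "star \<in> A"
    and "\<forall>i\<le>m. valid_conf n Q G (R i)"
    and "\<forall>i<m. star_step n A \<delta> star (R i) (R (Suc i))"
    and "milestone n Q G A \<delta> star (R 0)"
    and "milestone n Q G A \<delta> star (R m)"
  shows "upper0 n \<delta> R 0 m"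
proof -
  obtain S I where S: "S 0 = R 0" "star_run n Q G A \<delta> star S"
    and I: "infinite I" "0 \<in> I" "upper_on n \<delta> S I"
    using assms(5) unfolding milestone_iff by blast
  obtain S' I' where S': "S' 0 = R m" "star_run n Q G A \<delta> star S'"
    and I': "infinite I'" "0 \<in> I'" "upper_on n \<delta> S' I'"
    using assms(6) unfolding milestone_iff by blast
  have steps: "\<And>T i. star_run n Q G A \<delta> star T \<Longrightarrow> star_step n A \<delta> star (T i) (T (Suc i))"
    by (simp add: star_run_def)
  have R_S: "R t = S t" if "t \<le> m" for t
    using star_steps_agree[of R S m n A \<delta> star t] S(1) assms(4) steps[OF S(2)] that by simp
  have "S' = (\<lambda>t. S (m + t))"
  proof
    fix t
    show "S' t = S (m + t)"
      using star_steps_agree[of S' "\<lambda>t. S (m + t)" t n A \<delta> star t] S'(1) R_S[of m]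
        steps[OF S'(2)] steps[OF S(2)]
      by simp
  qed
  then have "upper_on n \<delta> S ((+) m ` I')" using I'(3) upper_on_shift[of n \<delta> S m I'] by simp
  moreover have "infinite ((+) m ` I')" using I'(1) by (simp add: finite_image_iff)
  moreover have "m \<in> (+) m ` I'" using I'(2) by (metis add_0_right image_eqI)
  ultimately have "upper0 n \<delta> S 0 m"
    using upper0_between_upper_sets[OF assms(1) S(2) I(1,3)] I(2) by blast
  moreover have "upper0 n \<delta> R 0 m = upper0 n \<delta> S 0 m" using R_S by (rule upper0_cong)
  ultimately show ?thesis by simp
qed
end
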